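(* Let $A\subseteq M\preccurlyeq N$ be models of a complete affine theory. Then $\mathrm{dcl}_M(A)=\mathrm{dcl}_N(A)$.
   Context: Affine continuous logic: $L$-structures are complete metric spaces $(M,d)$ with $d\le1$ and Lipschitz interpretations of function symbols and $[0,1]$-valued relation symbols. Affine formulas are built from $1$ and atomic formulas (including $d$) using only $r\cdot\phi$ ($r\in\mathbb R$), $\phi+\psi$, $\inf_x$, $\sup_x$; $M\preccurlyeq N$ means $M\subseteq N$ and every affine formula with parameters from $M$ has the same value in $M$ and $N$. A predicate $P:M\to\mathbb R$ is $A$-definable if it is a uniform limit on $M$ of interpretations of affine formulas with parameters from $A$. An element $a\in M$ is $A$-definable in $M$ if the predicate $x\mapsto d(x,a)$ on $M$ is $A$-definable; $\mathrm{dcl}_M(A)$ is the set of elements of $M$ that are $A$-definable in $M$. *)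

theory Defs
  imports Main "HOL-Analysis.Analysis"
begin

record ('f, 'r) signature =
  farity :: "'f \<Rightarrow> nat"
  rarity :: "'r \<Rightarrow> nat"

record ('a, 'f, 'r) struct =
  sdom  :: "'a set"
  sdist :: "'a \<Rightarrow> 'a \<Rightarrow> real"
  sfun  :: "'f \<Rightarrow> 'a list \<Rightarrow> 'a"
  srel  :: "'r \<Rightarrow> 'a list \<Rightarrow> real"

definition tuple_dist :: "('a \<Rightarrow> 'a \<Rightarrow> real) \<Rightarrow> 'a list \<Rightarrow> 'a list \<Rightarrow> real" where
  "tuple_dist d xs ys = (\<Sum>i<length xs. d (xs ! i) (ys ! i))"

definition is_structure :: "('f, 'r) signature \<Rightarrow> ('a, 'f, 'r) struct \<Rightarrow> bool" where
  "is_structure L S \<longleftrightarrow>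
     sdom S \<noteq> {} \<and>
     \<comment> \<open>metric bounded by 1\<close>
     (\<forall>x\<in>sdom S. \<forall>y\<in>sdom S. 0 \<le> sdist S x y \<and> sdist S x y \<le> 1
        \<and> (sdist S x y = 0 \<longleftrightarrow> x = y) \<and> sdist S x y = sdist S y x) \<and>
     (\<forall>x\<in>sdom S. \<forall>y\<in>sdom S. \<forall>z\<in>sdom S. sdist S x z \<le> sdist S x y + sdist S y z) \<and>
     \<comment> \<open>completeness\<close>
     (\<forall>X::nat \<Rightarrow> 'a. (\<forall>n. X n \<in> sdom S) \<longrightarrow>
        (\<forall>e>0. \<exists>N. \<forall>m\<ge>N. \<forall>n\<ge>N. sdist S (X m) (X n) < e) \<longrightarrow>
        (\<exists>l\<in>sdom S. \<forall>e>0. \<exists>N. \<forall>n\<ge>N. sdist S (X n) l < e)) \<and>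
     \<comment> \<open>function symbols: total on the universe and Lipschitz\<close>
     (\<forall>f. (\<forall>xs. set xs \<subseteq> sdom S \<and> length xs = farity L f \<longrightarrow> sfun S f xs \<in> sdom S) \<and>
          (\<exists>C. \<forall>xs ys. set xs \<subseteq> sdom S \<and> set ys \<subseteq> sdom S \<and>
               length xs = farity L f \<and> length ys = farity L f \<longrightarrow>
               sdist S (sfun S f xs) (sfun S f ys) \<le> C * tuple_dist (sdist S) xs ys)) \<and>
     \<comment> \<open>relation symbols: [0,1]-valued and Lipschitz\<close>
     (\<forall>R. (\<forall>xs. set xs \<subseteq> sdom S \<and> length xs = rarity L R \<longrightarrow>
              0 \<le> srel S R xs \<and> srel S R xs \<le> 1) \<and>
          (\<exists>C. \<forall>xs ys. set xs \<subseteq> sdom S \<and> set ys \<subseteq> sdom S \<and>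
               length xs = rarity L R \<and> length ys = rarity L R \<longrightarrow>
               \<bar>srel S R xs - srel S R ys\<bar> \<le> C * tuple_dist (sdist S) xs ys))"

datatype 'f tm = Var nat | Fn 'f "'f tm list"

datatype ('f, 'r) afm =
    One
  | Rel 'r "'f tm list"
  | Dist "'f tm" "'f tm"
  | Scale real "('f, 'r) afm"
  | Add "('f, 'r) afm" "('f, 'r) afm"
  | Inf nat "('f, 'r) afm"
  | Sup nat "('f, 'r) afm"

fun wf_tm :: "('f, 'r) signature \<Rightarrow> 'f tm \<Rightarrow> bool" where
  "wf_tm L (Var i) = True"
| "wf_tm L (Fn f ts) = (length ts = farity L f \<and> (\<forall>t\<in>set ts. wf_tm L t))"

fun wf_fm :: "('f, 'r) signature \<Rightarrow> ('f, 'r) afm \<Rightarrow> bool" where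
  "wf_fm L One = True"
| "wf_fm L (Rel R ts) = (length ts = rarity L R \<and> (\<forall>t\<in>set ts. wf_tm L t))"
| "wf_fm L (Dist t u) = (wf_tm L t \<and> wf_tm L u)"
| "wf_fm L (Scale r \<phi>) = wf_fm L \<phi>"
| "wf_fm L (Add \<phi> \<psi>) = (wf_fm L \<phi> \<and> wf_fm L \<psi>)"
| "wf_fm L (Inf i \<phi>) = wf_fm L \<phi>"
| "wf_fm L (Sup i \<phi>) = wf_fm L \<phi>"

fun fv_tm :: "'f tm \<Rightarrow> nat set" where
  "fv_tm (Var i) = {i}"
| "fv_tm (Fn f ts) = (\<Union>t\<in>set ts. fv_tm t)"

fun fv :: "('f, 'r) afm \<Rightarrow> nat set" where
  "fv One = {}"
| "fv (Rel R ts) = (\<Union>t\<in>set ts. fv_tm t)"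
| "fv (Dist t u) = fv_tm t \<union> fv_tm u"
| "fv (Scale r \<phi>) = fv \<phi>"
| "fv (Add \<phi> \<psi>) = fv \<phi> \<union> fv \<psi>"
| "fv (Inf i \<phi>) = fv \<phi> - {i}"
| "fv (Sup i \<phi>) = fv \<phi> - {i}"

fun tm_eval :: "('a, 'f, 'r) struct \<Rightarrow> (nat \<Rightarrow> 'a) \<Rightarrow> 'f tm \<Rightarrow> 'a" where
  "tm_eval S \<sigma> (Var i) = \<sigma> i"
| "tm_eval S \<sigma> (Fn f ts) = sfun S f (map (tm_eval S \<sigma>) ts)"

fun fm_eval :: "('a, 'f, 'r) struct \<Rightarrow> (nat \<Rightarrow> 'a) \<Rightarrow> ('f, 'r) afm \<Rightarrow> real" where
  "fm_eval S \<sigma> One = 1"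
| "fm_eval S \<sigma> (Rel R ts) = srel S R (map (tm_eval S \<sigma>) ts)"
| "fm_eval S \<sigma> (Dist t u) = sdist S (tm_eval S \<sigma> t) (tm_eval S \<sigma> u)"
| "fm_eval S \<sigma> (Scale r \<phi>) = r * fm_eval S \<sigma> \<phi>"
| "fm_eval S \<sigma> (Add \<phi> \<psi>) = fm_eval S \<sigma> \<phi> + fm_eval S \<sigma> \<psi>"
| "fm_eval S \<sigma> (Inf i \<phi>) = (INF a\<in>sdom S. fm_eval S (\<sigma>(i := a)) \<phi>)"
| "fm_eval S \<sigma> (Sup i \<phi>) = (SUP a\<in>sdom S. fm_eval S (\<sigma>(i := a)) \<phi>)"

definition substructure :: "('f, 'r) signature \<Rightarrow> ('a, 'f, 'r) struct \<Rightarrow> ('a, 'f, 'r) struct \<Rightarrow> bool" where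
  "substructure L M N \<longleftrightarrow>
     sdom M \<subseteq> sdom N \<and>
     (\<forall>x\<in>sdom M. \<forall>y\<in>sdom M. sdist M x y = sdist N x y) \<and>
     (\<forall>f xs. set xs \<subseteq> sdom M \<and> length xs = farity L f \<longrightarrow> sfun M f xs = sfun N f xs) \<and>
     (\<forall>R xs. set xs \<subseteq> sdom M \<and> length xs = rarity L R \<longrightarrow> srel M R xs = srel N R xs)"

definition elem_sub :: "('f, 'r) signature \<Rightarrow> ('a, 'f, 'r) struct \<Rightarrow> ('a, 'f, 'r) struct \<Rightarrow> bool" where
  "elem_sub L M N \<longleftrightarrow> substructure L M N \<and>
     (\<forall>\<phi> \<sigma>. wf_fm L \<phi> \<and> (\<forall>i. \<sigma> i \<in> sdom M) \<longrightarrow> fm_eval M \<sigma> \<phi> = fm_eval N \<sigma> \<phi>)"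

definition sentence_value :: "('a, 'f, 'r) struct \<Rightarrow> ('f, 'r) afm \<Rightarrow> real" where
  "sentence_value S \<phi> = fm_eval S (\<lambda>_. SOME a. a \<in> sdom S) \<phi>"

definition aff_theory :: "('f, 'r) signature \<Rightarrow> ('a, 'f, 'r) struct \<Rightarrow> (('f, 'r) afm \<times> real) set" where
  "aff_theory L S = {(\<phi>, sentence_value S \<phi>) | \<phi>. wf_fm L \<phi> \<and> fv \<phi> = {}}"

text \<open>A complete affine theory (in the signature L, realised by structures with universe in 'a):
  the affine theory of some L-structure.\<close>
definition complete_aff_theory :: "('f, 'r) signature \<Rightarrow> 'a itself \<Rightarrow> (('f, 'r) afm \<times> real) set \<Rightarrow> bool" where
  "complete_aff_theory L _ T \<longleftrightarrow> (\<exists>K :: ('a, 'f, 'r) struct. is_structure L K \<and> T = aff_theory L K)"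

definition models :: "('a, 'f, 'r) struct \<Rightarrow> (('f, 'r) afm \<times> real) set \<Rightarrow> bool" where
  "models S T \<longleftrightarrow> (\<forall>(\<phi>, r)\<in>T. sentence_value S \<phi> = r)"

text \<open>P is A-definable in M: uniform limit on M of affine formulas \<phi>(x) (x = variable 0) with
  parameters from A (all other free variables assigned to elements of A).\<close>
definition definable_pred :: "('f, 'r) signature \<Rightarrow> ('a, 'f, 'r) struct \<Rightarrow> 'a set \<Rightarrow> ('a \<Rightarrow> real) \<Rightarrow> bool" where
  "definable_pred L M A P \<longleftrightarrow>
     (\<forall>e>0. \<exists>\<phi> \<sigma>. wf_fm L \<phi> \<and> (\<forall>i\<in>fv \<phi> - {0}. \<sigma> i \<in> A) \<and>
        (\<forall>x\<in>sdom M. \<bar>P x - fm_eval M (\<sigma>(0 := x)) \<phi>\<bar> \<le> e))"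

definition dcl :: "('f, 'r) signature \<Rightarrow> ('a, 'f, 'r) struct \<Rightarrow> 'a set \<Rightarrow> 'a set" where
  "dcl L M A = {a \<in> sdom M. definable_pred L M A (\<lambda>x. sdist M x a)}"

end

theory Submission
  imports Defs
begin

text \<open>
  For \<open>a \<in> M\<close>, the approximation \<open>\<bar>d(x,a) - \<phi>(x)\<bar> \<le> \<epsilon>\<close> is a uniform bound on two formulas
  with the extra parameter \<open>a\<close>, i.e. an upper bound on their suprema over \<open>x\<close>, which are
  the same in \<open>M\<close> and \<open>N\<close>; so \<open>dcl\<^sub>M(A) \<subseteq> dcl\<^sub>N(A)\<close>, and restriction gives the converse
  for elements of \<open>M\<close>. If \<open>a \<in> dcl\<^sub>N(A)\<close>, an approximating formula \<open>\<phi>\<close> has infimum close to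
  \<open>0\<close> over \<open>N\<close>, hence over \<open>M\<close>; so \<open>a\<close> is a limit of points of \<open>M\<close>. Being complete,
  \<open>M\<close> is closed in \<open>N\<close>, and therefore \<open>a \<in> M\<close>.
\<close>

lemma tm_eval_cong:
  "(\<forall>i\<in>fv_tm t. \<sigma> i = \<tau> i) \<Longrightarrow> tm_eval S \<sigma> t = tm_eval S \<tau> t"
proof (induction t)
  case (Fn f ts)
  then have "map (tm_eval S \<sigma>) ts = map (tm_eval S \<tau>) ts"
    by auto
  then show ?case by (simp only: tm_eval.simps)
qed simp

lemma fm_eval_cong:
  "(\<forall>i\<in>fv \<phi>. \<sigma> i = \<tau> i) \<Longrightarrow> fm_eval S \<sigma> \<phi> = fm_eval S \<tau> \<phi>"
proof (induction \<phi> arbitrary: \<sigma> \<tau>)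
  case (Rel R ts)
  then show ?case by (auto intro!: arg_cong[where f = "srel S R"] map_cong tm_eval_cong)
next
  case (Dist t u)
  then show ?case by (auto intro!: arg_cong2[where f = "sdist S"] tm_eval_cong)
next
  case (Add \<phi> \<psi>)
  have "fm_eval S \<sigma> \<phi> = fm_eval S \<tau> \<phi>" "fm_eval S \<sigma> \<psi> = fm_eval S \<tau> \<psi>"
    using Add.prems by (intro Add.IH; auto)+
  then show ?case by simp
next
  case (Inf i \<phi>)
  then show ?case by (auto intro!: INF_cong)
next
  case (Sup i \<phi>)
  then show ?case by (auto intro!: SUP_cong)
qed auto

lemma finite_fv_tm: "finite (fv_tm t)"
  by (induction t) auto

lemma finite_fv: "finite (fv \<phi>)"
  by (induction \<phi>) (auto simp: finite_fv_tm)

lemma tm_eval_in_sdom: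
  assumes S: "is_structure L S" and "wf_tm L t" and "\<forall>i. \<sigma> i \<in> sdom S"
  shows "tm_eval S \<sigma> t \<in> sdom S"
  using assms(2)
proof (induction t)
  case (Var i)
  then show ?case using assms(3) by simp
next
  case (Fn f ts)
  have "\<forall>xs. set xs \<subseteq> sdom S \<and> length xs = farity L f \<longrightarrow> sfun S f xs \<in> sdom S"
    using S unfolding is_structure_def by blast
  moreover have "set (map (tm_eval S \<sigma>) ts) \<subseteq> sdom S" "length (map (tm_eval S \<sigma>) ts) = farity L f"
    using Fn by auto
  ultimately show ?case by simp
qed

lemma structure_sdom_nonempty: "is_structure L S \<Longrightarrow> sdom S \<noteq> {}"
  unfolding is_structure_def by blast

lemma abs_cINF_le:
  fixes f :: "'a \<Rightarrow> real"
  assumes "X \<noteq> {}" and "\<And>x. x \<in> X \<Longrightarrow> \<bar>f x\<bar> \<le> B"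
  shows "\<bar>INF x\<in>X. f x\<bar> \<le> B"
proof -
  have bound: "-B \<le> f x" "f x \<le> B" if "x \<in> X" for x
    using assms(2)[OF that] by (simp_all add: abs_le_iff)
  obtain x0 where x0: "x0 \<in> X" using assms(1) by blast
  have "bdd_below (f ` X)"
    using bound by (intro bdd_belowI2[where m = "-B"])
  then have "(INF x\<in>X. f x) \<le> B"
    using cINF_lower[of f X x0] x0 bound(2)[OF x0] by simp
  moreover have "-B \<le> (INF x\<in>X. f x)"
    using assms(1) bound by (intro cINF_greatest)
  ultimately show ?thesis by (simp add: abs_le_iff)
qed

lemma abs_cSUP_le:
  fixes f :: "'a \<Rightarrow> real"
  assumes "X \<noteq> {}" and "\<And>x. x \<in> X \<Longrightarrow> \<bar>f x\<bar> \<le> B"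
  shows "\<bar>SUP x\<in>X. f x\<bar> \<le> B"
proof -
  have bound: "-B \<le> f x" "f x \<le> B" if "x \<in> X" for x
    using assms(2)[OF that] by (simp_all add: abs_le_iff)
  obtain x0 where x0: "x0 \<in> X" using assms(1) by blast
  have "bdd_above (f ` X)"
    using bound by (intro bdd_aboveI2[where M = B])
  then have "-B \<le> (SUP x\<in>X. f x)"
    using cSUP_upper[of x0 X f] x0 bound(1)[OF x0] by simp
  moreover have "(SUP x\<in>X. f x) \<le> B"
    using assms(1) bound by (intro cSUP_least)
  ultimately show ?thesis by (simp add: abs_le_iff)
qed

lemma fm_eval_bounded:
  assumes S: "is_structure L S" and "wf_fm L \<phi>"
  shows "\<exists>B. \<forall>\<sigma>. (\<forall>i. \<sigma> i \<in> sdom S) \<longrightarrow> \<bar>fm_eval S \<sigma> \<phi>\<bar> \<le> B"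
  using assms(2)
proof (induction \<phi>)
  case One
  then show ?case by auto
next
  case (Rel R ts)
  have range: "\<forall>xs. set xs \<subseteq> sdom S \<and> length xs = rarity L R \<longrightarrow> 0 \<le> srel S R xs \<and> srel S R xs \<le> 1"
    using S unfolding is_structure_def by blast
  have "\<bar>fm_eval S \<sigma> (Rel R ts)\<bar> \<le> 1" if "\<forall>i. \<sigma> i \<in> sdom S" for \<sigma>
  proof -
    have "set (map (tm_eval S \<sigma>) ts) \<subseteq> sdom S" "length (map (tm_eval S \<sigma>) ts) = rarity L R"
      using Rel that tm_eval_in_sdom[OF S] by auto
    then show ?thesis using range by fastforce
  qed
  then show ?case by blast
next
  case (Dist t u)
  have "\<bar>fm_eval S \<sigma> (Dist t u)\<bar> \<le> 1" if "\<forall>i. \<sigma> i \<in> sdom S" for \<sigma>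
  proof -
    have "tm_eval S \<sigma> t \<in> sdom S" "tm_eval S \<sigma> u \<in> sdom S"
      using Dist that tm_eval_in_sdom[OF S] by auto
    then show ?thesis using S unfolding is_structure_def by auto
  qed
  then show ?case by blast
next
  case (Scale r \<phi>)
  then obtain B where "\<forall>\<sigma>. (\<forall>i. \<sigma> i \<in> sdom S) \<longrightarrow> \<bar>fm_eval S \<sigma> \<phi>\<bar> \<le> B" by auto
  then have "\<forall>\<sigma>. (\<forall>i. \<sigma> i \<in> sdom S) \<longrightarrow> \<bar>fm_eval S \<sigma> (Scale r \<phi>)\<bar> \<le> \<bar>r\<bar> * B"
    by (simp add: abs_mult mult_left_mono)
  then show ?case by blast
next
  case (Add \<phi> \<psi>)
  then obtain B1 B2 where "\<forall>\<sigma>. (\<forall>i. \<sigma> i \<in> sdom S) \<longrightarrow> \<bar>fm_eval S \<sigma> \<phi>\<bar> \<le> B1"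
    and "\<forall>\<sigma>. (\<forall>i. \<sigma> i \<in> sdom S) \<longrightarrow> \<bar>fm_eval S \<sigma> \<psi>\<bar> \<le> B2" by auto
  then have "\<forall>\<sigma>. (\<forall>i. \<sigma> i \<in> sdom S) \<longrightarrow> \<bar>fm_eval S \<sigma> (Add \<phi> \<psi>)\<bar> \<le> B1 + B2"
    by (smt (verit) fm_eval.simps(5))
  then show ?case by blast
next
  case (Inf j \<phi>)
  then obtain B where B: "\<forall>\<sigma>. (\<forall>i. \<sigma> i \<in> sdom S) \<longrightarrow> \<bar>fm_eval S \<sigma> \<phi>\<bar> \<le> B" by auto
  have "\<forall>\<sigma>. (\<forall>i. \<sigma> i \<in> sdom S) \<longrightarrow> \<bar>fm_eval S \<sigma> (Inf j \<phi>)\<bar> \<le> B"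
    using B structure_sdom_nonempty[OF S] by (auto intro!: abs_cINF_le)
  then show ?case by blast
next
  case (Sup j \<phi>)
  then obtain B where B: "\<forall>\<sigma>. (\<forall>i. \<sigma> i \<in> sdom S) \<longrightarrow> \<bar>fm_eval S \<sigma> \<phi>\<bar> \<le> B" by auto
  have "\<forall>\<sigma>. (\<forall>i. \<sigma> i \<in> sdom S) \<longrightarrow> \<bar>fm_eval S \<sigma> (Sup j \<phi>)\<bar> \<le> B"
    using B structure_sdom_nonempty[OF S] by (auto intro!: abs_cSUP_le)
  then show ?case by blast
qed

lemma elem_sub_sdom_subset: "elem_sub L M N \<Longrightarrow> sdom M \<subseteq> sdom N"
  unfolding elem_sub_def substructure_def by blast

lemma elem_sub_sdist:
  "elem_sub L M N \<Longrightarrow> x \<in> sdom M \<Longrightarrow> y \<in> sdom M \<Longrightarrow> sdist M x y = sdist N x y"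
  unfolding elem_sub_def substructure_def by blast

lemma elem_sub_fm_eval:
  "elem_sub L M N \<Longrightarrow> wf_fm L \<phi> \<Longrightarrow> \<forall>i. \<sigma> i \<in> sdom M \<Longrightarrow> fm_eval M \<sigma> \<phi> = fm_eval N \<sigma> \<phi>"
  unfolding elem_sub_def by blast

lemma elem_sub_lower_bound_transfer:
  assumes M: "is_structure L M" and N: "is_structure L N" and E: "elem_sub L M N"
    and wf: "wf_fm L \<phi>" and \<rho>: "\<forall>i. \<rho> i \<in> sdom M"
    and lower: "\<And>y. y \<in> sdom M \<Longrightarrow> c \<le> fm_eval M (\<rho>(j := y)) \<phi>"
    and x: "x \<in> sdom N"
  shows "c \<le> fm_eval N (\<rho>(j := x)) \<phi>"
proof -
  have \<rho>N: "\<forall>i. \<rho> i \<in> sdom N"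
    using \<rho> elem_sub_sdom_subset[OF E] by blast
  obtain B where B: "\<forall>\<sigma>. (\<forall>i. \<sigma> i \<in> sdom N) \<longrightarrow> \<bar>fm_eval N \<sigma> \<phi>\<bar> \<le> B"
    using fm_eval_bounded[OF N wf] by blast
  have "bdd_below ((\<lambda>y. fm_eval N (\<rho>(j := y)) \<phi>) ` sdom N)"
  proof (rule bdd_belowI2[where m = "-B"])
    fix y assume "y \<in> sdom N"
    then have "\<bar>fm_eval N (\<rho>(j := y)) \<phi>\<bar> \<le> B" using B \<rho>N by simp
    then show "-B \<le> fm_eval N (\<rho>(j := y)) \<phi>" by simp
  qed
  then have "fm_eval N \<rho> (Inf j \<phi>) \<le> fm_eval N (\<rho>(j := x)) \<phi>"
    using cINF_lower x by simp
  moreover have "c \<le> fm_eval M \<rho> (Inf j \<phi>)"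
    using structure_sdom_nonempty[OF M] lower by (simp add: cINF_greatest)
  moreover have "fm_eval M \<rho> (Inf j \<phi>) = fm_eval N \<rho> (Inf j \<phi>)"
    using elem_sub_fm_eval[OF E, of "Inf j \<phi>"] wf \<rho> by simp
  ultimately show ?thesis by linarith
qed

lemma elem_sub_upper_bound_transfer:
  assumes M: "is_structure L M" and N: "is_structure L N" and E: "elem_sub L M N"
    and wf: "wf_fm L \<phi>" and \<rho>: "\<forall>i. \<rho> i \<in> sdom M"
    and upper: "\<And>y. y \<in> sdom M \<Longrightarrow> fm_eval M (\<rho>(j := y)) \<phi> \<le> c"
    and x: "x \<in> sdom N"
  shows "fm_eval N (\<rho>(j := x)) \<phi> \<le> c"
  using elem_sub_lower_bound_transfer[OF M N E _ \<rho>, where \<phi> = "Scale (-1) \<phi>" and c = "-c"]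
    wf upper x by simp

lemma elem_sub_witness:
  assumes M: "is_structure L M" and N: "is_structure L N" and E: "elem_sub L M N"
    and wf: "wf_fm L \<phi>" and \<rho>: "\<forall>i. \<rho> i \<in> sdom M"
    and x: "x \<in> sdom N" and less: "fm_eval N (\<rho>(j := x)) \<phi> < c"
  shows "\<exists>y\<in>sdom M. fm_eval M (\<rho>(j := y)) \<phi> < c"
proof (rule ccontr)
  assume "\<not> ?thesis"
  then have "c \<le> fm_eval N (\<rho>(j := x)) \<phi>"
    by (intro elem_sub_lower_bound_transfer[OF M N E wf \<rho> _ x]) (simp add: not_less)
  with less show False by simp
qed

lemma elem_sub_dist_approx_transfer:
  fixes M N :: "('a, 'f, 'r) struct"
  assumes M: "is_structure L M" and N: "is_structure L N" and E: "elem_sub L M N"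
    and wf: "wf_fm L \<phi>" and \<tau>: "\<forall>i. \<tau> i \<in> sdom M" and a: "a \<in> sdom M"
    and approx: "\<forall>x\<in>sdom M. \<bar>sdist M x a - fm_eval M (\<tau>(0 := x)) \<phi>\<bar> \<le> e"
    and x: "x \<in> sdom N"
  shows "\<bar>sdist N x a - fm_eval N (\<tau>(0 := x)) \<phi>\<bar> \<le> e"
proof -
  obtain k where k: "k \<notin> insert 0 (fv \<phi>)"
    using ex_new_if_finite[OF infinite_UNIV_nat] finite_fv by (metis finite_insert)
  define \<rho> where "\<rho> = \<tau>(k := a)"
  define \<delta> :: "('f, 'r) afm" where "\<delta> = Dist (Var 0) (Var k)"
  have \<rho>: "\<forall>i. \<rho> i \<in> sdom M"
    using \<tau> a by (simp add: \<rho>_def)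
  have eval_\<delta>: "fm_eval S (\<rho>(0 := y)) \<delta> = sdist S y a" for S :: "('a, 'f, 'r) struct" and y
    using k by (simp add: \<rho>_def \<delta>_def)
  have eval_\<phi>: "fm_eval S (\<rho>(0 := y)) \<phi> = fm_eval S (\<tau>(0 := y)) \<phi>" for S :: "('a, 'f, 'r) struct" and y
    using k by (intro fm_eval_cong) (auto simp: \<rho>_def)
  have wf_\<delta>: "wf_fm L \<delta>"
    by (simp add: \<delta>_def)
  have "fm_eval N (\<rho>(0 := x)) (Add \<delta> (Scale (-1) \<phi>)) \<le> e"
    by (rule elem_sub_upper_bound_transfer[OF M N E _ \<rho> _ x])
      (use wf wf_\<delta> approx eval_\<delta> eval_\<phi> in \<open>auto simp: abs_le_iff\<close>)
  moreover have "fm_eval N (\<rho>(0 := x)) (Add \<phi> (Scale (-1) \<delta>)) \<le> e"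
    by (rule elem_sub_upper_bound_transfer[OF M N E _ \<rho> _ x])
      (use wf wf_\<delta> approx eval_\<delta> eval_\<phi> in \<open>auto simp: abs_le_iff\<close>)
  ultimately show ?thesis
    using eval_\<delta> eval_\<phi> by (simp add: abs_le_iff)
qed

lemma definable_pred_iff_total_params:
  assumes "A \<subseteq> D" and "D \<noteq> {}"
  shows "definable_pred L S A P \<longleftrightarrow>
    (\<forall>e>0. \<exists>\<phi> \<tau>. wf_fm L \<phi> \<and> (\<forall>i\<in>fv \<phi> - {0}. \<tau> i \<in> A) \<and> (\<forall>i. \<tau> i \<in> D) \<and>
       (\<forall>x\<in>sdom S. \<bar>P x - fm_eval S (\<tau>(0 := x)) \<phi>\<bar> \<le> e))"
    (is "_ \<longleftrightarrow> (\<forall>e>0. ?approx e)")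
proof
  assume P: "definable_pred L S A P"
  obtain d where d: "d \<in> D" using assms(2) by blast
  show "\<forall>e>0. ?approx e"
  proof (intro allI impI)
    fix e :: real assume "e > 0"
    then obtain \<phi> \<sigma> where wf: "wf_fm L \<phi>" and \<sigma>: "\<forall>i\<in>fv \<phi> - {0}. \<sigma> i \<in> A"
      and approx: "\<forall>x\<in>sdom S. \<bar>P x - fm_eval S (\<sigma>(0 := x)) \<phi>\<bar> \<le> e"
      using P[unfolded definable_pred_def, rule_format, OF \<open>e > 0\<close>] by blast
    define \<tau> where "\<tau> i = (if i \<in> fv \<phi> - {0} then \<sigma> i else d)" for i
    have "fm_eval S (\<tau>(0 := x)) \<phi> = fm_eval S (\<sigma>(0 := x)) \<phi>" for x
      by (rule fm_eval_cong) (simp add: \<tau>_def)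
    then have "\<forall>x\<in>sdom S. \<bar>P x - fm_eval S (\<tau>(0 := x)) \<phi>\<bar> \<le> e"
      using approx by simp
    moreover have "\<forall>i\<in>fv \<phi> - {0}. \<tau> i \<in> A" "\<forall>i. \<tau> i \<in> D"
      using \<sigma> d assms(1) by (auto simp: \<tau>_def)
    ultimately show "?approx e"
      using wf by blast
  qed
next
  assume approx: "\<forall>e>0. ?approx e"
  show "definable_pred L S A P"
    unfolding definable_pred_def
  proof (intro allI impI)
    fix e :: real assume "e > 0"
    show "\<exists>\<phi> \<sigma>. wf_fm L \<phi> \<and> (\<forall>i\<in>fv \<phi> - {0}. \<sigma> i \<in> A) \<and>
        (\<forall>x\<in>sdom S. \<bar>P x - fm_eval S (\<sigma>(0 := x)) \<phi>\<bar> \<le> e)"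
      using approx[rule_format, OF \<open>e > 0\<close>] by (elim exE conjE) (intro exI conjI; assumption)
  qed
qed

lemma definable_pred_cong:
  "(\<And>x. x \<in> sdom S \<Longrightarrow> P x = Q x) \<Longrightarrow> definable_pred L S A P = definable_pred L S A Q"
  unfolding definable_pred_def by simp

lemma elem_sub_definable_pred_restrict:
  assumes M: "is_structure L M" and E: "elem_sub L M N" and A: "A \<subseteq> sdom M"
    and P: "definable_pred L N A P"
  shows "definable_pred L M A P"
  unfolding definable_pred_iff_total_params[OF A structure_sdom_nonempty[OF M]]
proof (intro allI impI)
  fix e :: real assume "e > 0"
  obtain \<phi> \<tau> where wf: "wf_fm L \<phi>" and "\<forall>i\<in>fv \<phi> - {0}. \<tau> i \<in> A"
    and \<tau>: "\<forall>i. \<tau> i \<in> sdom M" and approx: "\<forall>x\<in>sdom N. \<bar>P x - fm_eval N (\<tau>(0 := x)) \<phi>\<bar> \<le> e"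
    using P[unfolded definable_pred_iff_total_params[OF A structure_sdom_nonempty[OF M]], rule_format, OF \<open>e > 0\<close>]
    by (elim exE conjE) (rule that)
  moreover have "\<forall>x\<in>sdom M. \<bar>P x - fm_eval M (\<tau>(0 := x)) \<phi>\<bar> \<le> e"
    using approx elem_sub_sdom_subset[OF E] elem_sub_fm_eval[OF E wf] \<tau> by auto
  ultimately show "\<exists>\<phi> \<tau>. wf_fm L \<phi> \<and> (\<forall>i\<in>fv \<phi> - {0}. \<tau> i \<in> A) \<and> (\<forall>i. \<tau> i \<in> sdom M) \<and>
      (\<forall>x\<in>sdom M. \<bar>P x - fm_eval M (\<tau>(0 := x)) \<phi>\<bar> \<le> e)"
    by blast
qed

lemma elem_sub_definable_dist_extend:
  assumes M: "is_structure L M" and N: "is_structure L N" and E: "elem_sub L M N"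
    and A: "A \<subseteq> sdom M" and a: "a \<in> sdom M"
    and D: "definable_pred L M A (\<lambda>x. sdist M x a)"
  shows "definable_pred L N A (\<lambda>x. sdist N x a)"
  unfolding definable_pred_iff_total_params[OF A structure_sdom_nonempty[OF M]]
proof (intro allI impI)
  fix e :: real assume "e > 0"
  obtain \<phi> \<tau> where wf: "wf_fm L \<phi>" and "\<forall>i\<in>fv \<phi> - {0}. \<tau> i \<in> A"
    and \<tau>: "\<forall>i. \<tau> i \<in> sdom M" and "\<forall>x\<in>sdom M. \<bar>sdist M x a - fm_eval M (\<tau>(0 := x)) \<phi>\<bar> \<le> e"
    using D[unfolded definable_pred_iff_total_params[OF A structure_sdom_nonempty[OF M]], rule_format, OF \<open>e > 0\<close>]
    by (elim exE conjE) (rule that)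
  moreover from this have "\<forall>x\<in>sdom N. \<bar>sdist N x a - fm_eval N (\<tau>(0 := x)) \<phi>\<bar> \<le> e"
    using elem_sub_dist_approx_transfer[OF M N E wf \<tau> a] by blast
  ultimately show "\<exists>\<phi> \<tau>. wf_fm L \<phi> \<and> (\<forall>i\<in>fv \<phi> - {0}. \<tau> i \<in> A) \<and> (\<forall>i. \<tau> i \<in> sdom M) \<and>
      (\<forall>x\<in>sdom N. \<bar>sdist N x a - fm_eval N (\<tau>(0 := x)) \<phi>\<bar> \<le> e)"
    by blast
qed

lemma elem_sub_approx_dcl:
  assumes M: "is_structure L M" and N: "is_structure L N" and E: "elem_sub L M N"
    and A: "A \<subseteq> sdom M" and a: "a \<in> dcl L N A" and "e > 0"
  shows "\<exists>y\<in>sdom M. sdist N y a < e"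
proof -
  have aN: "a \<in> sdom N" and D: "definable_pred L N A (\<lambda>x. sdist N x a)"
    using a unfolding dcl_def by auto
  have "e / 3 > 0"
    using \<open>e > 0\<close> by simp
  obtain \<phi> \<tau> where wf: "wf_fm L \<phi>" and \<tau>: "\<forall>i. \<tau> i \<in> sdom M"
    and approx: "\<forall>x\<in>sdom N. \<bar>sdist N x a - fm_eval N (\<tau>(0 := x)) \<phi>\<bar> \<le> e / 3"
    using D[unfolded definable_pred_iff_total_params[OF A structure_sdom_nonempty[OF M]], rule_format, OF \<open>e / 3 > 0\<close>]
    by (elim exE conjE) (rule that)
  have "sdist N a a = 0"
    using N aN unfolding is_structure_def by blast
  moreover have "\<bar>sdist N a a - fm_eval N (\<tau>(0 := a)) \<phi>\<bar> \<le> e / 3"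
    using approx aN by blast
  ultimately have "fm_eval N (\<tau>(0 := a)) \<phi> < 2 * e / 3"
    using \<open>e > 0\<close> by linarith
  then obtain y where y: "y \<in> sdom M" and "fm_eval M (\<tau>(0 := y)) \<phi> < 2 * e / 3"
    using elem_sub_witness[OF M N E wf \<tau> aN] by blast
  moreover have "fm_eval M (\<tau>(0 := y)) \<phi> = fm_eval N (\<tau>(0 := y)) \<phi>"
    using elem_sub_fm_eval[OF E wf] \<tau> y by simp
  moreover have "\<bar>sdist N y a - fm_eval N (\<tau>(0 := y)) \<phi>\<bar> \<le> e / 3"
    using approx y elem_sub_sdom_subset[OF E] by blast
  ultimately have "sdist N y a < e" by linarith
  with y show ?thesis by blast
qed

text \<open>\<open>sdist\<close> is only constrained on the universe; it is cut off outside so as to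
  obtain a \<open>Metric_space\<close>.\<close>

definition struct_metric :: "('a, 'f, 'r) struct \<Rightarrow> 'a \<Rightarrow> 'a \<Rightarrow> real" where
  "struct_metric S x y = (if x \<in> sdom S \<and> y \<in> sdom S then sdist S x y else 0)"

lemma Metric_space_struct_metric:
  assumes "is_structure L S"
  shows "Metric_space (sdom S) (struct_metric S)"
proof
  have metric: "\<forall>x\<in>sdom S. \<forall>y\<in>sdom S. 0 \<le> sdist S x y \<and> (sdist S x y = 0 \<longleftrightarrow> x = y)
      \<and> sdist S x y = sdist S y x"
    and triangle: "\<forall>x\<in>sdom S. \<forall>y\<in>sdom S. \<forall>z\<in>sdom S. sdist S x z \<le> sdist S x y + sdist S y z"
    using assms unfolding is_structure_def by blast+
  show "0 \<le> struct_metric S x y" "struct_metric S x y = struct_metric S y x" for x y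
    using metric by (auto simp: struct_metric_def)
  show "x \<in> sdom S \<Longrightarrow> y \<in> sdom S \<Longrightarrow> struct_metric S x y = 0 \<longleftrightarrow> x = y" for x y
    using metric by (simp add: struct_metric_def)
  show "x \<in> sdom S \<Longrightarrow> y \<in> sdom S \<Longrightarrow> z \<in> sdom S \<Longrightarrow>
      struct_metric S x z \<le> struct_metric S x y + struct_metric S y z" for x y z
    using triangle by (simp add: struct_metric_def)
qed

lemma substructure_mcomplete:
  assumes M: "is_structure L M" and N: "is_structure L N" and MN: "substructure L M N"
  shows "Metric_space.mcomplete (sdom M) (struct_metric N)"
proof -
  have sub: "sdom M \<subseteq> sdom N"
    and dist: "\<And>x y. x \<in> sdom M \<Longrightarrow> y \<in> sdom M \<Longrightarrow> struct_metric N x y = sdist M x y"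
    using MN unfolding substructure_def struct_metric_def by auto
  have complete: "\<forall>X :: nat \<Rightarrow> _. (\<forall>n. X n \<in> sdom M) \<longrightarrow>
        (\<forall>e>0. \<exists>K. \<forall>m\<ge>K. \<forall>n\<ge>K. sdist M (X m) (X n) < e) \<longrightarrow>
        (\<exists>l\<in>sdom M. \<forall>e>0. \<exists>K. \<forall>n\<ge>K. sdist M (X n) l < e)"
    using M unfolding is_structure_def by blast
  interpret Metric_space "sdom M" "struct_metric N"
    using Metric_space.subspace[OF Metric_space_struct_metric[OF N] sub] .
  show ?thesis
    unfolding mcomplete_def MCauchy_def limit_metric_sequentially
  proof (intro allI impI)
    fix X :: "nat \<Rightarrow> _"
    assume Cauchy: "range X \<subseteq> sdom M \<and>
        (\<forall>e>0. \<exists>K. \<forall>m n. K \<le> m \<longrightarrow> K \<le> n \<longrightarrow> struct_metric N (X m) (X n) < e)"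
    then have X: "\<forall>n. X n \<in> sdom M"
      by blast
    with Cauchy have "\<forall>e>0. \<exists>K. \<forall>m\<ge>K. \<forall>n\<ge>K. sdist M (X m) (X n) < e"
      by (simp add: dist)
    then obtain l where "l \<in> sdom M" "\<forall>e>0. \<exists>K. \<forall>n\<ge>K. sdist M (X n) l < e"
      using complete X by blast
    then show "\<exists>l. l \<in> sdom M \<and> (\<forall>e>0. \<exists>K. \<forall>n\<ge>K. X n \<in> sdom M \<and> struct_metric N (X n) l < e)"
      using X by (auto simp: dist)
  qed
qed
lemma substructure_closedin:
  assumes M: "is_structure L M" and N: "is_structure L N" and MN: "substructure L M N"
  shows "closedin (Metric_space.mtopology (sdom N) (struct_metric N)) (sdom M)"
proof -
  interpret Metric_space "sdom N" "struct_metric N"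
    using Metric_space_struct_metric[OF N] .
  interpret Submetric "sdom N" "struct_metric N" "sdom M"
    using MN by unfold_locales (simp add: substructure_def)
  show ?thesis
    using mcomplete_imp_closedin substructure_mcomplete[OF M N MN] by blast
qed

lemma dcl_elem_sub_subset_sdom:
  assumes M: "is_structure L M" and N: "is_structure L N" and E: "elem_sub L M N"
    and A: "A \<subseteq> sdom M"
  shows "dcl L N A \<subseteq> sdom M"
proof
  fix a assume a: "a \<in> dcl L N A"
  interpret Metric_space "sdom N" "struct_metric N"
    using Metric_space_struct_metric[OF N] .
  have MN: "sdom M \<subseteq> sdom N"
    using elem_sub_sdom_subset[OF E] .
  have aN: "a \<in> sdom N"
    using a unfolding dcl_def by blast
  have "\<exists>y\<in>sdom M. y \<in> mball a r" if "r > 0" for r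
  proof -
    obtain y where y: "y \<in> sdom M" "sdist N y a < r"
      using elem_sub_approx_dcl[OF M N E A a \<open>r > 0\<close>] by blast
    then have "struct_metric N a y < r"
      using MN aN commute[of a y] by (auto simp: struct_metric_def)
    with y aN MN show ?thesis by auto
  qed
  then have "a \<in> mtopology closure_of sdom M"
    using aN by (simp add: metric_closure_of)
  also have "\<dots> = sdom M"
    using substructure_closedin[OF M N] E closure_of_closedin unfolding elem_sub_def by blast
  finally show "a \<in> sdom M" .
qed

lemma elem_sub_dcl_subset:
  assumes M: "is_structure L M" and N: "is_structure L N" and E: "elem_sub L M N"
    and A: "A \<subseteq> sdom M"
  shows "dcl L M A \<subseteq> dcl L N A"
proof
  fix a assume "a \<in> dcl L M A"
  then have a: "a \<in> sdom M" and "definable_pred L M A (\<lambda>x. sdist M x a)"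
    unfolding dcl_def by auto
  then have "definable_pred L N A (\<lambda>x. sdist N x a)"
    using elem_sub_definable_dist_extend[OF M N E A] by blast
  then show "a \<in> dcl L N A"
    using a elem_sub_sdom_subset[OF E] unfolding dcl_def by blast
qed

lemma elem_sub_dcl_supset:
  assumes M: "is_structure L M" and N: "is_structure L N" and E: "elem_sub L M N"
    and A: "A \<subseteq> sdom M"
  shows "dcl L N A \<subseteq> dcl L M A"
proof
  fix a assume a: "a \<in> dcl L N A"
  then have aM: "a \<in> sdom M"
    using dcl_elem_sub_subset_sdom[OF M N E A] by blast
  have "definable_pred L M A (\<lambda>x. sdist N x a)"
    using a elem_sub_definable_pred_restrict[OF M E A] unfolding dcl_def by blast
  then have "definable_pred L M A (\<lambda>x. sdist M x a)"
    using definable_pred_cong[of M "\<lambda>x. sdist M x a" "\<lambda>x. sdist N x a"] elem_sub_sdist[OF E _ aM]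
    by auto
  with aM show "a \<in> dcl L M A"
    unfolding dcl_def by blast
qed

theorem mainTheorem11:
  fixes L :: "('f, 'r) signature"
    and M N :: "('a, 'f, 'r) struct"
    and A :: "'a set"
    and T :: "(('f, 'r) afm \<times> real) set"
  assumes "complete_aff_theory L TYPE('a) T"
    and "is_structure L M" and "models M T"
    and "is_structure L N" and "models N T"
    and "A \<subseteq> sdom M"
    and "elem_sub L M N"
  shows "dcl L M A = dcl L N A"
  using elem_sub_dcl_subset[OF assms(2,4,7,6)] elem_sub_dcl_supset[OF assms(2,4,7,6)]
  by (rule equalityI)

end
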